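(* Let $a,b>0$, $A=(0,a)\times(0,b)$ and $\Gamma=(0,a)\times\{0\}$. Then $$K(\Gamma,A)=\frac{\pi}{a\tanh\left(\frac{\pi b}{a}\right)}.$$
   Context: $K(\Gamma,A)=\inf\{\int_A|\nabla v|^2\,dx\,dy: v\in H^1(A),\ \int_\Gamma v^2\,d\mathcal{H}^1=1,\ v=0\text{ on }\partial A\setminus\Gamma\}$, where $\mathcal{H}^1$ is the one-dimensional Hausdorff measure and boundary values are traces. *)

theory Defs
  imports "HOL-Analysis.Analysis"
begin

definition C1_fun :: "(real \<times> real \<Rightarrow> real) \<Rightarrow> (real \<times> real \<Rightarrow> (real \<times> real) \<Rightarrow>\<^sub>L real) \<Rightarrow> bool" where
  "C1_fun \<phi> D \<longleftrightarrow> (\<forall>z. (\<phi> has_derivative blinfun_apply (D z)) (at z)) \<and> continuous_on UNIV D"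

definition L2_on :: "(real \<times> real) set \<Rightarrow> (real \<times> real \<Rightarrow> real) \<Rightarrow> bool" where
  "L2_on U f \<longleftrightarrow> set_borel_measurable lborel U f \<and> set_integrable lborel U (\<lambda>z. (f z)\<^sup>2)"

definition weak_grad :: "(real \<times> real) set \<Rightarrow> (real \<times> real \<Rightarrow> real) \<Rightarrow>
    (real \<times> real \<Rightarrow> real) \<Rightarrow> (real \<times> real \<Rightarrow> real) \<Rightarrow> bool" where
  "weak_grad U v g1 g2 \<longleftrightarrow>
    (\<forall>\<phi> D. C1_fun \<phi> D \<and> compact (closure {z. \<phi> z \<noteq> 0}) \<and> closure {z. \<phi> z \<noteq> 0} \<subseteq> U \<longrightarrow>
       (LINT z:U|lborel. v z * D z (1,0)) = - (LINT z:U|lborel. g1 z * \<phi> z) \<and>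
       (LINT z:U|lborel. v z * D z (0,1)) = - (LINT z:U|lborel. g2 z * \<phi> z))"

definition H1_on :: "(real \<times> real) set \<Rightarrow> (real \<times> real \<Rightarrow> real) \<Rightarrow>
    (real \<times> real \<Rightarrow> real) \<Rightarrow> (real \<times> real \<Rightarrow> real) \<Rightarrow> bool" where
  "H1_on U v g1 g2 \<longleftrightarrow> L2_on U v \<and> L2_on U g1 \<and> L2_on U g2 \<and> weak_grad U v g1 g2"

definition rect :: "real \<Rightarrow> real \<Rightarrow> (real \<times> real) set" where
  "rect a b = {0<..<a} \<times> {0<..<b}"

text \<open>Integral w.r.t. the 1-dimensional Hausdorff measure on the boundary of the
  rectangle (0,a)\<times>(0,b), i.e. the sum of the arc-length integrals over its four sides
  (nonnegative integrands).\<close>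
definition bdry_nn_integral :: "real \<Rightarrow> real \<Rightarrow> (real \<times> real \<Rightarrow> ennreal) \<Rightarrow> ennreal" where
  "bdry_nn_integral a b f =
     (\<integral>\<^sup>+ x. indicator {0<..<a} x * f (x, 0) \<partial>lborel)
   + (\<integral>\<^sup>+ x. indicator {0<..<a} x * f (x, b) \<partial>lborel)
   + (\<integral>\<^sup>+ y. indicator {0<..<b} y * f (0, y) \<partial>lborel)
   + (\<integral>\<^sup>+ y. indicator {0<..<b} y * f (a, y) \<partial>lborel)"

text \<open>u is the trace on the boundary of the rectangle of v \<in> H^1 (with weak gradient
  (g1,g2)): the trace operator is the continuous extension of restriction to the boundary,
  i.e. u is the L^2(boundary) limit of the restrictions of C^1 functions w_n converging to v
  in H^1(rect a b).\<close>
definition rect_trace :: "real \<Rightarrow> real \<Rightarrow> (real \<times> real \<Rightarrow> real) \<Rightarrow>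
    (real \<times> real \<Rightarrow> real) \<Rightarrow> (real \<times> real \<Rightarrow> real) \<Rightarrow> (real \<times> real \<Rightarrow> real) \<Rightarrow> bool" where
  "rect_trace a b v g1 g2 u \<longleftrightarrow>
     (\<lambda>x. u (x, 0)) \<in> borel_measurable lborel \<and> (\<lambda>x. u (x, b)) \<in> borel_measurable lborel \<and>
     (\<lambda>y. u (0, y)) \<in> borel_measurable lborel \<and> (\<lambda>y. u (a, y)) \<in> borel_measurable lborel \<and>
     (\<exists>w Dw. (\<forall>n. C1_fun (w n) (Dw n)) \<and>
        ((\<lambda>n. \<integral>\<^sup>+ z. indicator (rect a b) z *
              ennreal ((w n z - v z)\<^sup>2 + (Dw n z (1,0) - g1 z)\<^sup>2 + (Dw n z (0,1) - g2 z)\<^sup>2) \<partial>lborel)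
          \<longlonglongrightarrow> 0) \<and>
        ((\<lambda>n. bdry_nn_integral a b (\<lambda>z. ennreal ((w n z - u z)\<^sup>2))) \<longlonglongrightarrow> 0))"

definition K_rect :: "real \<Rightarrow> real \<Rightarrow> real" where
  "K_rect a b = Inf {LINT z:rect a b|lborel. (g1 z)\<^sup>2 + (g2 z)\<^sup>2 | v g1 g2 u.
      H1_on (rect a b) v g1 g2 \<and> rect_trace a b v g1 g2 u \<and>
      (\<integral>\<^sup>+ x. indicator {0<..<a} x * ennreal ((u (x, 0))\<^sup>2) \<partial>lborel) = 1 \<and>
      (AE x in lborel. x \<in> {0<..<a} \<longrightarrow> u (x, b) = 0) \<and>
      (AE y in lborel. y \<in> {0..b} \<longrightarrow> u (0, y) = 0) \<and>
      (AE y in lborel. y \<in> {0..b} \<longrightarrow> u (a, y) = 0)}"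

end

theory Submission
  imports Defs
begin

text \<open>
  Upper bound: the harmonic function \<open>sin (pi x / a) sinh (pi (b - y) / a)\<close>, normalised on the
  bottom side, is admissible, and Green's formula gives its energy \<open>(pi / a) coth (pi b / a)\<close>.

  Lower bound by calibration: if \<open>F' = m\<^sup>2 + F\<^sup>2\<close> and \<open>G' = G\<^sup>2 - m\<^sup>2\<close>, then
  \<open>|\<nabla>w|\<^sup>2 + \<partial>\<^sub>x(F w\<^sup>2) + \<partial>\<^sub>y(G w\<^sup>2)\<close> is a sum of squares, so integrating over the rectangle
  bounds \<open>G(0) \<integral>\<^sub>\<Gamma> w\<^sup>2\<close> by the energy of \<open>w\<close> plus boundary terms on the other three sides.
  For \<open>m < pi / a\<close> and \<open>c > b\<close> the solutions \<open>F = m tan (m (x - a/2))\<close>, \<open>G = m coth (m (c - y))\<close>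
  are smooth on the closed rectangle. This is applied to the \<open>C\<^sup>1\<close> approximants of an admissible
  function given by the trace, whose boundary terms off \<open>\<Gamma>\<close> tend to zero; the inequality
  \<open>p\<^sup>2 \<le> (1 + e) q\<^sup>2 + (1 + 1/e) (q - p)\<^sup>2\<close> lets us pass to the limit knowing only that the
  differences tend to zero in \<open>L\<^sup>2\<close>. Finally \<open>e \<rightarrow> 0\<close>, \<open>m \<rightarrow> pi / a\<close> and \<open>c \<rightarrow> b\<close>.
\<close>

lemma rect_eq_box: "rect a b = box (0,0) (a,b)"
  by (auto simp: rect_def box_def Basis_prod_def inner_prod_def)

lemma sets_lborel_rect [measurable]: "rect a b \<in> sets lborel"
  unfolding rect_eq_box by simp

lemma nn_integral_rect_continuous:
  fixes f :: "real \<times> real \<Rightarrow> real"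
  assumes "continuous_on (cbox (0,0) (a,b)) f" "\<And>z. 0 \<le> f z"
  shows "(\<integral>\<^sup>+ z. indicator (rect a b) z * ennreal (f z) \<partial>lborel) = ennreal (integral (cbox (0,0) (a,b)) f)"
proof -
  have "(f has_integral integral (cbox (0,0) (a,b)) f) (rect a b)"
    unfolding rect_eq_box has_integral_open_interval
    using assms(1) integrable_continuous integrable_integral by blast
  from nn_integral_has_integral_lebesgue'[OF _ this] assms(2)
  show ?thesis by (simp add: mult.commute)
qed

lemma nn_integral_interval_continuous:
  fixes f :: "real \<Rightarrow> real"
  assumes "continuous_on {l..u} f" "\<And>x. 0 \<le> f x"
  shows "(\<integral>\<^sup>+ x. indicator {l<..<u} x * ennreal (f x) \<partial>lborel) = ennreal (integral {l..u} f)"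
proof -
  have "(f has_integral integral {l..u} f) {l<..<u}"
    unfolding has_integral_Icc_iff_Ioo[symmetric]
    using assms(1) integrable_continuous_real integrable_integral by blast
  from nn_integral_has_integral_lebesgue'[OF _ this] assms(2)
  show ?thesis by (simp add: mult.commute)
qed

lemma
  fixes f :: "real \<times> real \<Rightarrow> real"
  assumes "continuous_on UNIV f"
  shows set_integrable_rect_continuous: "set_integrable lborel (rect a b) f"
    and set_integral_rect_continuous: "(LINT z:rect a b|lborel. f z) = integral (cbox (0,0) (a,b)) f"
proof -
  have "set_integrable lebesgue (cbox (0,0) (a,b)) f"
    using absolutely_integrable_continuous[of "(0,0)" "(a,b)" f] assms continuous_on_subset
    unfolding absolutely_integrable_on_def by blast
  then have "set_integrable lebesgue (rect a b) f"
    by (rule set_integrable_subset) (auto simp: rect_eq_box box_subset_cbox)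
  moreover have "(\<lambda>z. indicator (rect a b) z *\<^sub>R f z) \<in> borel_measurable lborel"
    using assms borel_measurable_continuous_onI unfolding rect_eq_box
    by (intro borel_measurable_scaleR borel_measurable_indicator) auto
  ultimately show integrable: "set_integrable lborel (rect a b) f"
    unfolding set_integrable_def using integrable_completion by blast
  show "(LINT z:rect a b|lborel. f z) = integral (cbox (0,0) (a,b)) f"
    using set_borel_integral_eq_integral(2)[OF integrable] unfolding rect_eq_box integral_open_interval .
qed

lemma integral_cbox_partial_fst:
  fixes P Q :: "real \<times> real \<Rightarrow> real"
  assumes "x0 \<le> x1" "continuous_on (cbox (x0,y0) (x1,y1)) Q"
    and "\<And>x y. x \<in> {x0..x1} \<Longrightarrow> y \<in> {y0..y1} \<Longrightarrow>
      ((\<lambda>x. P (x,y)) has_real_derivative Q (x,y)) (at x within {x0..x1})"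
  shows "integral (cbox (x0,y0) (x1,y1)) Q = integral {y0..y1} (\<lambda>y. P (x1,y) - P (x0,y))"
proof -
  have "integral (cbox (x0,y0) (x1,y1)) Q = integral (cbox x0 x1) (\<lambda>x. integral (cbox y0 y1) (\<lambda>y. Q (x,y)))"
    using integral_prod_continuous[OF assms(2)] .
  also have "\<dots> = integral (cbox y0 y1) (\<lambda>y. integral (cbox x0 x1) (\<lambda>x. Q (x,y)))"
    using integral_swap_continuous[of x0 y0 x1 y1 "\<lambda>x y. Q (x,y)"] assms(2) by simp
  also have "\<dots> = integral (cbox y0 y1) (\<lambda>y. P (x1,y) - P (x0,y))"
  proof (rule integral_cong)
    fix y assume "y \<in> cbox y0 y1"
    then have "((\<lambda>x. Q (x,y)) has_integral P (x1,y) - P (x0,y)) {x0..x1}"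
      using fundamental_theorem_of_calculus[of x0 x1 "\<lambda>x. P (x,y)" "\<lambda>x. Q (x,y)"] assms(1,3)
      by (auto simp: has_real_derivative_iff_has_vector_derivative)
    then show "integral (cbox x0 x1) (\<lambda>x. Q (x,y)) = P (x1,y) - P (x0,y)" by (simp add: integral_unique)
  qed
  finally show ?thesis by (simp add: cbox_interval)
qed

lemma integral_cbox_partial_snd:
  fixes P Q :: "real \<times> real \<Rightarrow> real"
  assumes "y0 \<le> y1" "continuous_on (cbox (x0,y0) (x1,y1)) Q"
    and "\<And>x y. x \<in> {x0..x1} \<Longrightarrow> y \<in> {y0..y1} \<Longrightarrow>
      ((\<lambda>y. P (x,y)) has_real_derivative Q (x,y)) (at y within {y0..y1})"
  shows "integral (cbox (x0,y0) (x1,y1)) Q = integral {x0..x1} (\<lambda>x. P (x,y1) - P (x,y0))"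
proof -
  have "integral (cbox (x0,y0) (x1,y1)) Q = integral (cbox x0 x1) (\<lambda>x. integral (cbox y0 y1) (\<lambda>y. Q (x,y)))"
    using integral_prod_continuous[OF assms(2)] .
  also have "\<dots> = integral (cbox x0 x1) (\<lambda>x. P (x,y1) - P (x,y0))"
  proof (rule integral_cong)
    fix x assume "x \<in> cbox x0 x1"
    then have "((\<lambda>y. Q (x,y)) has_integral P (x,y1) - P (x,y0)) {y0..y1}"
      using fundamental_theorem_of_calculus[of y0 y1 "\<lambda>y. P (x,y)" "\<lambda>y. Q (x,y)"] assms(1,3)
      by (auto simp: has_real_derivative_iff_has_vector_derivative)
    then show "integral (cbox y0 y1) (\<lambda>y. Q (x,y)) = P (x,y1) - P (x,y0)" by (simp add: integral_unique)
  qed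
  finally show ?thesis by (simp add: cbox_interval)
qed

lemma C1_fun_continuous:
  assumes "C1_fun w D"
  shows "continuous_on UNIV w" "continuous_on UNIV (\<lambda>z. D z (1,0))" "continuous_on UNIV (\<lambda>z. D z (0,1))"
    and "continuous_on UNIV D"
proof -
  show "continuous_on UNIV w"
    using assms unfolding C1_fun_def
    by (meson continuous_on_eq_continuous_at has_derivative_continuous open_UNIV)
  show "continuous_on UNIV D" using assms unfolding C1_fun_def by blast
  then show "continuous_on UNIV (\<lambda>z. D z (1,0))" "continuous_on UNIV (\<lambda>z. D z (0,1))"
    by (auto intro!: continuous_intros)
qed

lemma C1_fun_measurable:
  assumes "C1_fun w D"
  shows "w \<in> borel_measurable lborel" "(\<lambda>z. D z (1,0)) \<in> borel_measurable lborel"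
    "(\<lambda>z. D z (0,1)) \<in> borel_measurable lborel"
    "(\<lambda>x. w (x,y)) \<in> borel_measurable lborel" "(\<lambda>y. w (x,y)) \<in> borel_measurable lborel"
proof -
  note cont = C1_fun_continuous[OF assms]
  then have "continuous_on UNIV (\<lambda>x. w (x,y))" "continuous_on UNIV (\<lambda>y. w (x,y))"
    by (auto intro!: continuous_on_compose2[OF cont(1)] continuous_intros)
  with cont show "w \<in> borel_measurable lborel" "(\<lambda>z. D z (1,0)) \<in> borel_measurable lborel"
    "(\<lambda>z. D z (0,1)) \<in> borel_measurable lborel"
    "(\<lambda>x. w (x,y)) \<in> borel_measurable lborel" "(\<lambda>y. w (x,y)) \<in> borel_measurable lborel"
    using borel_measurable_continuous_onI by (auto simp: measurable_lborel1)
qed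

lemma C1_fun_partial_fst:
  assumes "C1_fun w D"
  shows "((\<lambda>x. w (x,y)) has_real_derivative D (x,y) (1,0)) (at x)"
proof -
  have "((\<lambda>x. (x,y)) has_derivative (\<lambda>h. (h,0))) (at x)"
    by (auto intro!: derivative_eq_intros)
  moreover have "(w has_derivative blinfun_apply (D (x,y))) (at (x,y))"
    using assms unfolding C1_fun_def by blast
  ultimately have "((\<lambda>x. w (x,y)) has_derivative (\<lambda>h. D (x,y) (h,0))) (at x)"
    by (rule has_derivative_compose[where g=w, unfolded o_def])
  moreover have "(\<lambda>h. D (x,y) (h,0)) = (\<lambda>h. D (x,y) (1,0) * h)"
  proof
    fix h :: real
    have "(h,0::real) = h *\<^sub>R (1,0)" by simp
    then show "D (x,y) (h,0) = D (x,y) (1,0) * h"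
      by (metis blinfun.scaleR_right real_scaleR_def mult.commute)
  qed
  ultimately show ?thesis
    by (simp add: has_field_derivative_def)
qed

lemma C1_fun_partial_snd:
  assumes "C1_fun w D"
  shows "((\<lambda>y. w (x,y)) has_real_derivative D (x,y) (0,1)) (at y)"
proof -
  have "((\<lambda>y. (x,y)) has_derivative (\<lambda>h. (0,h))) (at y)"
    by (auto intro!: derivative_eq_intros)
  moreover have "(w has_derivative blinfun_apply (D (x,y))) (at (x,y))"
    using assms unfolding C1_fun_def by blast
  ultimately have "((\<lambda>y. w (x,y)) has_derivative (\<lambda>h. D (x,y) (0,h))) (at y)"
    by (rule has_derivative_compose[where g=w, unfolded o_def])
  moreover have "(\<lambda>h. D (x,y) (0,h)) = (\<lambda>h. D (x,y) (0,1) * h)"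
  proof
    fix h :: real
    have "(0::real,h) = h *\<^sub>R (0,1)" by simp
    then show "D (x,y) (0,h) = D (x,y) (0,1) * h"
      by (metis blinfun.scaleR_right real_scaleR_def mult.commute)
  qed
  ultimately show ?thesis
    by (simp add: has_field_derivative_def)
qed

definition rect_admissible ::
    "real \<Rightarrow> real \<Rightarrow> (real \<times> real \<Rightarrow> real) \<Rightarrow> (real \<times> real \<Rightarrow> real) \<Rightarrow>
      (real \<times> real \<Rightarrow> real) \<Rightarrow> (real \<times> real \<Rightarrow> real) \<Rightarrow> bool" where
  "rect_admissible a b v g1 g2 u \<longleftrightarrow>
     H1_on (rect a b) v g1 g2 \<and> rect_trace a b v g1 g2 u \<and>
     (\<integral>\<^sup>+ x. indicator {0<..<a} x * ennreal ((u (x, 0))\<^sup>2) \<partial>lborel) = 1 \<and>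
     (AE x in lborel. x \<in> {0<..<a} \<longrightarrow> u (x, b) = 0) \<and>
     (AE y in lborel. y \<in> {0..b} \<longrightarrow> u (0, y) = 0) \<and>
     (AE y in lborel. y \<in> {0..b} \<longrightarrow> u (a, y) = 0)"

lemma K_rect_eq_Inf_admissible:
  "K_rect a b = Inf {LINT z:rect a b|lborel. (g1 z)\<^sup>2 + (g2 z)\<^sup>2 | v g1 g2 u. rect_admissible a b v g1 g2 u}"
  unfolding K_rect_def rect_admissible_def ..

lemma continuous_L2_on_rect:
  assumes "continuous_on UNIV f"
  shows "L2_on (rect a b) f"
  unfolding L2_on_def set_borel_measurable_def
proof
  have "f \<in> borel_measurable lborel"
    using assms borel_measurable_continuous_onI by (simp add: measurable_lborel1)
  then show "(\<lambda>z. indicator (rect a b) z *\<^sub>R f z) \<in> borel_measurable lborel" by measurable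
  show "set_integrable lborel (rect a b) (\<lambda>z. (f z)\<^sup>2)"
    using assms by (intro set_integrable_rect_continuous) (auto intro!: continuous_intros)
qed

lemma C1_fun_integration_by_parts_rect:
  assumes v: "C1_fun v Dv" and \<phi>: "C1_fun \<phi> D" and "0 \<le> a" "0 \<le> b"
    and \<phi>_bdry: "\<And>y. \<phi> (0,y) = 0" "\<And>y. \<phi> (a,y) = 0" "\<And>x. \<phi> (x,0) = 0" "\<And>x. \<phi> (x,b) = 0"
  shows "integral (cbox (0,0) (a,b)) (\<lambda>z. v z * D z (1,0)) = - integral (cbox (0,0) (a,b)) (\<lambda>z. Dv z (1,0) * \<phi> z)"
    and "integral (cbox (0,0) (a,b)) (\<lambda>z. v z * D z (0,1)) = - integral (cbox (0,0) (a,b)) (\<lambda>z. Dv z (0,1) * \<phi> z)"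
proof -
  note cont = C1_fun_continuous[OF v] C1_fun_continuous[OF \<phi>]
  have cont_prods: "continuous_on UNIV (\<lambda>z. Dv z (1,0) * \<phi> z)" "continuous_on UNIV (\<lambda>z. v z * D z (1,0))"
    "continuous_on UNIV (\<lambda>z. Dv z (0,1) * \<phi> z)" "continuous_on UNIV (\<lambda>z. v z * D z (0,1))"
    using cont by (auto intro!: continuous_on_mult)
  then have integrable: "(\<lambda>z. Dv z (1,0) * \<phi> z) integrable_on cbox (0,0) (a,b)"
    "(\<lambda>z. v z * D z (1,0)) integrable_on cbox (0,0) (a,b)"
    "(\<lambda>z. Dv z (0,1) * \<phi> z) integrable_on cbox (0,0) (a,b)"
    "(\<lambda>z. v z * D z (0,1)) integrable_on cbox (0,0) (a,b)"
    by (auto intro: integrable_continuous continuous_on_subset)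
  have "integral (cbox (0,0) (a,b)) (\<lambda>z. Dv z (1,0) * \<phi> z + v z * D z (1,0))
      = integral {0..b} (\<lambda>y. v (a,y) * \<phi> (a,y) - v (0,y) * \<phi> (0,y))"
  proof (rule integral_cbox_partial_fst[where P = "\<lambda>z. v z * \<phi> z"])
    show "continuous_on (cbox (0,0) (a,b)) (\<lambda>z. Dv z (1,0) * \<phi> z + v z * D z (1,0))"
      using cont_prods by (intro continuous_on_add) (auto intro: continuous_on_subset)
    fix x y
    show "((\<lambda>x. v (x,y) * \<phi> (x,y)) has_real_derivative Dv (x,y) (1,0) * \<phi> (x,y) + v (x,y) * D (x,y) (1,0))
        (at x within {0..a})"
      using DERIV_mult[OF C1_fun_partial_fst[OF v, where x = x and y = y]
          C1_fun_partial_fst[OF \<phi>, where x = x and y = y]]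
      by (simp add: has_field_derivative_at_within mult.commute)
  qed (use \<open>0 \<le> a\<close> in simp)
  then show "integral (cbox (0,0) (a,b)) (\<lambda>z. v z * D z (1,0)) = - integral (cbox (0,0) (a,b)) (\<lambda>z. Dv z (1,0) * \<phi> z)"
    using integral_add[OF integrable(1,2)] by (simp add: \<phi>_bdry)
  have "integral (cbox (0,0) (a,b)) (\<lambda>z. Dv z (0,1) * \<phi> z + v z * D z (0,1))
      = integral {0..a} (\<lambda>x. v (x,b) * \<phi> (x,b) - v (x,0) * \<phi> (x,0))"
  proof (rule integral_cbox_partial_snd[where P = "\<lambda>z. v z * \<phi> z"])
    show "continuous_on (cbox (0,0) (a,b)) (\<lambda>z. Dv z (0,1) * \<phi> z + v z * D z (0,1))"
      using cont_prods by (intro continuous_on_add) (auto intro: continuous_on_subset)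
    fix x y
    show "((\<lambda>y. v (x,y) * \<phi> (x,y)) has_real_derivative Dv (x,y) (0,1) * \<phi> (x,y) + v (x,y) * D (x,y) (0,1))
        (at y within {0..b})"
      using DERIV_mult[OF C1_fun_partial_snd[OF v, where x = x and y = y]
          C1_fun_partial_snd[OF \<phi>, where x = x and y = y]]
      by (simp add: has_field_derivative_at_within mult.commute)
  qed (use \<open>0 \<le> b\<close> in simp)
  then show "integral (cbox (0,0) (a,b)) (\<lambda>z. v z * D z (0,1)) = - integral (cbox (0,0) (a,b)) (\<lambda>z. Dv z (0,1) * \<phi> z)"
    using integral_add[OF integrable(3,4)] by (simp add: \<phi>_bdry)
qed

lemma C1_fun_weak_grad_rect:
  assumes v: "C1_fun v Dv" and "0 \<le> a" "0 \<le> b"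
  shows "weak_grad (rect a b) v (\<lambda>z. Dv z (1,0)) (\<lambda>z. Dv z (0,1))"
  unfolding weak_grad_def
proof (intro allI impI)
  fix \<phi> D assume "C1_fun \<phi> D \<and> compact (closure {z. \<phi> z \<noteq> 0}) \<and> closure {z. \<phi> z \<noteq> 0} \<subseteq> rect a b"
  then have \<phi>: "C1_fun \<phi> D" and supp: "closure {z. \<phi> z \<noteq> 0} \<subseteq> rect a b" by auto
  have "\<phi> z = 0" if "z \<notin> rect a b" for z
  proof (rule ccontr)
    assume "\<phi> z \<noteq> 0"
    then have "z \<in> closure {z. \<phi> z \<noteq> 0}" by (intro subsetD[OF closure_subset]) simp
    with that supp show False by blast
  qed
  then have "\<phi> (0,y) = 0" "\<phi> (a,y) = 0" "\<phi> (x,0) = 0" "\<phi> (x,b) = 0" for x y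
    by (simp_all add: rect_def)
  note parts = C1_fun_integration_by_parts_rect[OF v \<phi> \<open>0 \<le> a\<close> \<open>0 \<le> b\<close> this]
  have "continuous_on UNIV (\<lambda>z. v z * D z (1,0))" "continuous_on UNIV (\<lambda>z. Dv z (1,0) * \<phi> z)"
    "continuous_on UNIV (\<lambda>z. v z * D z (0,1))" "continuous_on UNIV (\<lambda>z. Dv z (0,1) * \<phi> z)"
    using C1_fun_continuous[OF v] C1_fun_continuous[OF \<phi>] by (auto intro!: continuous_on_mult)
  then show "(LINT z:rect a b|lborel. v z * D z (1,0)) = - (LINT z:rect a b|lborel. Dv z (1,0) * \<phi> z) \<and>
      (LINT z:rect a b|lborel. v z * D z (0,1)) = - (LINT z:rect a b|lborel. Dv z (0,1) * \<phi> z)"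
    using parts by (simp add: set_integral_rect_continuous)
qed

lemma C1_fun_H1_on_rect:
  assumes "C1_fun v Dv" "0 \<le> a" "0 \<le> b"
  shows "H1_on (rect a b) v (\<lambda>z. Dv z (1,0)) (\<lambda>z. Dv z (0,1))"
  unfolding H1_on_def
  using C1_fun_weak_grad_rect[OF assms] continuous_L2_on_rect C1_fun_continuous[OF assms(1)] by blast

lemma C1_fun_rect_trace_self:
  assumes "C1_fun v Dv"
  shows "rect_trace a b v (\<lambda>z. Dv z (1,0)) (\<lambda>z. Dv z (0,1)) v"
  unfolding rect_trace_def
proof (intro conjI exI[of _ "\<lambda>n. v"] exI[of _ "\<lambda>n. Dv"])
  show "(\<lambda>x. v (x, 0)) \<in> borel_measurable lborel" "(\<lambda>x. v (x, b)) \<in> borel_measurable lborel"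
    "(\<lambda>y. v (0, y)) \<in> borel_measurable lborel" "(\<lambda>y. v (a, y)) \<in> borel_measurable lborel"
    using C1_fun_measurable[OF assms] by auto
qed (simp_all add: assms bdry_nn_integral_def)

lemma C1_fun_rect_admissible:
  assumes "C1_fun v Dv" "0 \<le> a" "0 \<le> b"
    and "(\<integral>\<^sup>+ x. indicator {0<..<a} x * ennreal ((v (x, 0))\<^sup>2) \<partial>lborel) = 1"
    and "\<And>x. v (x, b) = 0" "\<And>y. v (0, y) = 0" "\<And>y. v (a, y) = 0"
  shows "rect_admissible a b v (\<lambda>z. Dv z (1,0)) (\<lambda>z. Dv z (0,1)) v"
  unfolding rect_admissible_def
  using assms C1_fun_H1_on_rect C1_fun_rect_trace_self by simp

lemma has_integral_weighted_sq_partial_fst: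
  fixes w :: "real \<times> real \<Rightarrow> real" and F F' :: "real \<Rightarrow> real"
  assumes w: "C1_fun w D" and "0 \<le> a"
    and F: "\<And>x. x \<in> {0..a} \<Longrightarrow> (F has_real_derivative F' x) (at x)" and "continuous_on {0..a} F'"
  shows "((\<lambda>z. F' (fst z) * (w z)\<^sup>2 + F (fst z) * (2 * w z * D z (1,0))) has_integral
      F a * integral {0..b} (\<lambda>y. (w (a,y))\<^sup>2) - F 0 * integral {0..b} (\<lambda>y. (w (0,y))\<^sup>2)) (cbox (0,0) (a,b))"
proof -
  define P where "P z = F (fst z) * (w z)\<^sup>2" for z
  define Q where "Q z = F' (fst z) * (w z)\<^sup>2 + F (fst z) * (2 * w z * D z (1,0))" for z
  have "continuous_on UNIV w" using C1_fun_continuous(1)[OF w] .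
  then have cont_side: "continuous_on {0..b} (\<lambda>y. w (x,y))" for x
    by (auto intro!: continuous_intros continuous_on_compose2[OF \<open>continuous_on UNIV w\<close>])
  have cont_w: "continuous_on (cbox (0,0) (a,b)) w" "continuous_on (cbox (0,0) (a,b)) D"
    using C1_fun_continuous(1,4)[OF w] by (auto intro: continuous_on_subset[OF _ subset_UNIV])
  have "continuous_on {0..a} F"
    using F by (meson DERIV_continuous continuous_at_imp_continuous_on)
  then have "continuous_on (cbox (0,0) (a,b)) (\<lambda>z. F (fst z))" "continuous_on (cbox (0,0) (a,b)) (\<lambda>z. F' (fst z))"
    using \<open>continuous_on {0..a} F'\<close>
    by (auto intro!: continuous_on_compose2[OF _ continuous_on_fst[OF continuous_on_id]] simp: cbox_Pair_eq)
  with cont_w have cont: "continuous_on (cbox (0,0) (a,b)) Q"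
    unfolding Q_def by (auto intro!: continuous_intros)
  have "integral (cbox (0,0) (a,b)) Q = integral {0..b} (\<lambda>y. P (a,y) - P (0,y))"
  proof (rule integral_cbox_partial_fst)
    fix x y assume "x \<in> {0..a}"
    have "((\<lambda>x. P (x,y)) has_real_derivative Q (x,y)) (at x)"
      unfolding P_def Q_def fst_conv
      by (rule DERIV_cong[OF DERIV_mult[OF F[OF \<open>x \<in> {0..a}\<close>]
            DERIV_power[OF C1_fun_partial_fst[OF w], where n = 2]]])
         (simp add: algebra_simps power2_eq_square)
    then show "((\<lambda>x. P (x,y)) has_real_derivative Q (x,y)) (at x within {0..a})"
      by (rule has_field_derivative_at_within)
  qed (use \<open>0 \<le> a\<close> cont in auto)
  also have "\<dots> = F a * integral {0..b} (\<lambda>y. (w (a,y))\<^sup>2) - F 0 * integral {0..b} (\<lambda>y. (w (0,y))\<^sup>2)"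
    unfolding P_def
    by (subst integral_diff) (auto intro!: integrable_continuous_real continuous_intros cont_side)
  finally have "(Q has_integral F a * integral {0..b} (\<lambda>y. (w (a,y))\<^sup>2) - F 0 * integral {0..b} (\<lambda>y. (w (0,y))\<^sup>2)) (cbox (0,0) (a,b))"
    using integrable_continuous[OF cont] by (metis has_integral_integral)
  then show ?thesis unfolding Q_def[abs_def] .
qed

lemma has_integral_weighted_sq_partial_snd:
  fixes w :: "real \<times> real \<Rightarrow> real" and G G' :: "real \<Rightarrow> real"
  assumes w: "C1_fun w D" and "0 \<le> b"
    and G: "\<And>y. y \<in> {0..b} \<Longrightarrow> (G has_real_derivative G' y) (at y)" and "continuous_on {0..b} G'"
  shows "((\<lambda>z. G' (snd z) * (w z)\<^sup>2 + G (snd z) * (2 * w z * D z (0,1))) has_integral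
      G b * integral {0..a} (\<lambda>x. (w (x,b))\<^sup>2) - G 0 * integral {0..a} (\<lambda>x. (w (x,0))\<^sup>2)) (cbox (0,0) (a,b))"
proof -
  define P where "P z = G (snd z) * (w z)\<^sup>2" for z
  define Q where "Q z = G' (snd z) * (w z)\<^sup>2 + G (snd z) * (2 * w z * D z (0,1))" for z
  have "continuous_on UNIV w" using C1_fun_continuous(1)[OF w] .
  then have cont_side: "continuous_on {0..a} (\<lambda>x. w (x,y))" for y
    by (auto intro!: continuous_intros continuous_on_compose2[OF \<open>continuous_on UNIV w\<close>])
  have cont_w: "continuous_on (cbox (0,0) (a,b)) w" "continuous_on (cbox (0,0) (a,b)) D"
    using C1_fun_continuous(1,4)[OF w] by (auto intro: continuous_on_subset[OF _ subset_UNIV])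
  have "continuous_on {0..b} G"
    using G by (meson DERIV_continuous continuous_at_imp_continuous_on)
  then have "continuous_on (cbox (0,0) (a,b)) (\<lambda>z. G (snd z))" "continuous_on (cbox (0,0) (a,b)) (\<lambda>z. G' (snd z))"
    using \<open>continuous_on {0..b} G'\<close>
    by (auto intro!: continuous_on_compose2[OF _ continuous_on_snd[OF continuous_on_id]] simp: cbox_Pair_eq)
  with cont_w have cont: "continuous_on (cbox (0,0) (a,b)) Q"
    unfolding Q_def by (auto intro!: continuous_intros)
  have "integral (cbox (0,0) (a,b)) Q = integral {0..a} (\<lambda>x. P (x,b) - P (x,0))"
  proof (rule integral_cbox_partial_snd)
    fix x y assume "y \<in> {0..b}"
    have "((\<lambda>y. P (x,y)) has_real_derivative Q (x,y)) (at y)"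
      unfolding P_def Q_def snd_conv
      by (rule DERIV_cong[OF DERIV_mult[OF G[OF \<open>y \<in> {0..b}\<close>]
            DERIV_power[OF C1_fun_partial_snd[OF w], where n = 2]]])
         (simp add: algebra_simps power2_eq_square)
    then show "((\<lambda>y. P (x,y)) has_real_derivative Q (x,y)) (at y within {0..b})"
      by (rule has_field_derivative_at_within)
  qed (use \<open>0 \<le> b\<close> cont in auto)
  also have "\<dots> = G b * integral {0..a} (\<lambda>x. (w (x,b))\<^sup>2) - G 0 * integral {0..a} (\<lambda>x. (w (x,0))\<^sup>2)"
    unfolding P_def
    by (subst integral_diff) (auto intro!: integrable_continuous_real continuous_intros cont_side)
  finally have "(Q has_integral G b * integral {0..a} (\<lambda>x. (w (x,b))\<^sup>2) - G 0 * integral {0..a} (\<lambda>x. (w (x,0))\<^sup>2)) (cbox (0,0) (a,b))"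
    using integrable_continuous[OF cont] by (metis has_integral_integral)
  then show ?thesis unfolding Q_def[abs_def] .
qed

lemma riccati_calibration:
  fixes w :: "real \<times> real \<Rightarrow> real" and F G :: "real \<Rightarrow> real"
  assumes w: "C1_fun w D" and "0 \<le> a" "0 \<le> b"
    and F: "\<And>x. x \<in> {0..a} \<Longrightarrow> (F has_real_derivative m\<^sup>2 + (F x)\<^sup>2) (at x)"
    and G: "\<And>y. y \<in> {0..b} \<Longrightarrow> (G has_real_derivative (G y)\<^sup>2 - m\<^sup>2) (at y)"
  shows "G 0 * integral {0..a} (\<lambda>x. (w (x,0))\<^sup>2)
    \<le> integral (cbox (0,0) (a,b)) (\<lambda>z. (D z (1,0))\<^sup>2 + (D z (0,1))\<^sup>2)
      + G b * integral {0..a} (\<lambda>x. (w (x,b))\<^sup>2)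
      + F a * integral {0..b} (\<lambda>y. (w (a,y))\<^sup>2) - F 0 * integral {0..b} (\<lambda>y. (w (0,y))\<^sup>2)"
proof -
  define E where "E z = (D z (1,0))\<^sup>2 + (D z (0,1))\<^sup>2" for z
  define Qx where "Qx z = (m\<^sup>2 + (F (fst z))\<^sup>2) * (w z)\<^sup>2 + F (fst z) * (2 * w z * D z (1,0))" for z
  define Qy where "Qy z = ((G (snd z))\<^sup>2 - m\<^sup>2) * (w z)\<^sup>2 + G (snd z) * (2 * w z * D z (0,1))" for z
  have "continuous_on (cbox (0,0) (a,b)) D"
    using C1_fun_continuous(4)[OF w] by (rule continuous_on_subset) simp
  then have "continuous_on (cbox (0,0) (a,b)) E"
    unfolding E_def by (intro continuous_intros)
  then have int_E: "(E has_integral integral (cbox (0,0) (a,b)) E) (cbox (0,0) (a,b))"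
    by (intro integrable_integral integrable_continuous)
  have "continuous_on {0..a} F" "continuous_on {0..b} G"
    using F G by (meson DERIV_continuous continuous_at_imp_continuous_on)+
  then have cont: "continuous_on {0..a} (\<lambda>x. m\<^sup>2 + (F x)\<^sup>2)" "continuous_on {0..b} (\<lambda>y. (G y)\<^sup>2 - m\<^sup>2)"
    by (auto intro!: continuous_intros)
  have int_Qx: "(Qx has_integral F a * integral {0..b} (\<lambda>y. (w (a,y))\<^sup>2) - F 0 * integral {0..b} (\<lambda>y. (w (0,y))\<^sup>2))
      (cbox (0,0) (a,b))"
    unfolding Qx_def[abs_def] by (rule has_integral_weighted_sq_partial_fst[OF w \<open>0 \<le> a\<close> F cont(1)])
  have int_Qy: "(Qy has_integral G b * integral {0..a} (\<lambda>x. (w (x,b))\<^sup>2) - G 0 * integral {0..a} (\<lambda>x. (w (x,0))\<^sup>2))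
      (cbox (0,0) (a,b))"
    unfolding Qy_def[abs_def] by (rule has_integral_weighted_sq_partial_snd[OF w \<open>0 \<le> b\<close> G cont(2)])
  have "((\<lambda>z. E z + Qx z + Qy z) has_integral integral (cbox (0,0) (a,b)) E
      + (F a * integral {0..b} (\<lambda>y. (w (a,y))\<^sup>2) - F 0 * integral {0..b} (\<lambda>y. (w (0,y))\<^sup>2))
      + (G b * integral {0..a} (\<lambda>x. (w (x,b))\<^sup>2) - G 0 * integral {0..a} (\<lambda>x. (w (x,0))\<^sup>2)))
      (cbox (0,0) (a,b))"
    using has_integral_add[OF has_integral_add[OF int_E int_Qx] int_Qy] by simp
  moreover have "0 \<le> E z + Qx z + Qy z" for z
  proof -
    have "E z + Qx z + Qy z = (D z (1,0) + F (fst z) * w z)\<^sup>2 + (D z (0,1) + G (snd z) * w z)\<^sup>2"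
      unfolding E_def Qx_def Qy_def by (simp add: algebra_simps power2_eq_square)
    then show ?thesis by simp
  qed
  ultimately show ?thesis
    unfolding E_def[abs_def] by (auto dest!: has_integral_nonneg)
qed

lemma tan_riccati:
  assumes "cos (m * (x - k)) \<noteq> 0"
  shows "((\<lambda>x. m * tan (m * (x - k))) has_real_derivative m\<^sup>2 + (m * tan (m * (x - k)))\<^sup>2) (at x)"
proof -
  have "((\<lambda>x. m * tan (m * (x - k))) has_real_derivative m * (inverse ((cos (m * (x - k)))\<^sup>2) * (m * (1 - 0)))) (at x)"
    by (rule derivative_eq_intros refl assms | simp)+
  moreover have "inverse ((cos (m * (x - k)))\<^sup>2) = 1 + (tan (m * (x - k)))\<^sup>2"
    using assms by (simp add: tan_def field_simps power2_eq_square)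
  ultimately show ?thesis by (simp add: algebra_simps power2_eq_square)
qed

lemma coth_riccati:
  assumes "m * (c - y) \<noteq> 0"
  shows "((\<lambda>y. m / tanh (m * (c - y))) has_real_derivative (m / tanh (m * (c - y)))\<^sup>2 - m\<^sup>2) (at y)"
proof -
  have t: "tanh (m * (c - y)) \<noteq> 0" using assms by simp
  have "((\<lambda>y. m / tanh (m * (c - y))) has_real_derivative
     -(m * ((1 - (tanh (m * (c - y)))\<^sup>2) * (m * (0 - 1))) / (tanh (m * (c - y)) * tanh (m * (c - y))))) (at y)"
    by (rule derivative_eq_intros refl t | simp)+
  moreover have "-(m * ((1 - (tanh (m * (c - y)))\<^sup>2) * (m * (0 - 1))) / (tanh (m * (c - y)) * tanh (m * (c - y))))
     = (m / tanh (m * (c - y)))\<^sup>2 - m\<^sup>2"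
    using t by (simp add: field_simps power2_eq_square)
  ultimately show ?thesis by simp
qed

lemma tan_coth_calibration:
  assumes w: "C1_fun w D" and "0 < a" "0 < b" "0 < m" "m < pi / a" "b < c"
  shows "m / tanh (m * c) * integral {0..a} (\<lambda>x. (w (x,0))\<^sup>2)
    \<le> integral (cbox (0,0) (a,b)) (\<lambda>z. (D z (1,0))\<^sup>2 + (D z (0,1))\<^sup>2)
      + m / tanh (m * (c - b)) * integral {0..a} (\<lambda>x. (w (x,b))\<^sup>2)
      + m * tan (m * a / 2) * (integral {0..b} (\<lambda>y. (w (0,y))\<^sup>2) + integral {0..b} (\<lambda>y. (w (a,y))\<^sup>2))"
proof -
  have "cos (m * (x - a / 2)) \<noteq> 0" if "x \<in> {0..a}" for x
  proof -
    have "m * a < pi" using \<open>m < pi / a\<close> \<open>0 < a\<close> by (simp add: field_simps)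
    moreover have "0 \<le> m * x" "m * x \<le> m * a" using that \<open>0 < m\<close> by auto
    ultimately have "-(pi / 2) < m * (x - a / 2)" "m * (x - a / 2) < pi / 2"
      by (simp_all add: right_diff_distrib)
    then show ?thesis using cos_gt_zero_pi by fastforce
  qed
  then have F: "((\<lambda>x. m * tan (m * (x - a / 2))) has_real_derivative
      m\<^sup>2 + (m * tan (m * (x - a / 2)))\<^sup>2) (at x)" if "x \<in> {0..a}" for x
    using tan_riccati that by blast
  have G: "((\<lambda>y. m / tanh (m * (c - y))) has_real_derivative
      (m / tanh (m * (c - y)))\<^sup>2 - m\<^sup>2) (at y)" if "y \<in> {0..b}" for y
    using coth_riccati that \<open>0 < m\<close> \<open>b < c\<close> by simp
  show ?thesis
    using riccati_calibration[OF w, where a = a and b = b, OF _ _ F G] \<open>0 < a\<close> \<open>0 < b\<close>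
    by (simp add: algebra_simps field_simps)
qed

lemma C1_fun_tan_coth_calibration:
  assumes w: "C1_fun w D" and "0 < a" "0 < b" "0 < m" "m < pi / a" "b < c"
  shows "ennreal (m / tanh (m * c)) * (\<integral>\<^sup>+ x. indicator {0<..<a} x * ennreal ((w (x,0))\<^sup>2) \<partial>lborel)
    \<le> (\<integral>\<^sup>+ z. indicator (rect a b) z * ennreal ((D z (1,0))\<^sup>2 + (D z (0,1))\<^sup>2) \<partial>lborel)
      + ennreal (m / tanh (m * (c - b))) * (\<integral>\<^sup>+ x. indicator {0<..<a} x * ennreal ((w (x,b))\<^sup>2) \<partial>lborel)
      + ennreal (m * tan (m * a / 2)) * ((\<integral>\<^sup>+ y. indicator {0<..<b} y * ennreal ((w (0,y))\<^sup>2) \<partial>lborel)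
        + (\<integral>\<^sup>+ y. indicator {0<..<b} y * ennreal ((w (a,y))\<^sup>2) \<partial>lborel))"
proof -
  define A where "A = m / tanh (m * c)"
  define B where "B = m / tanh (m * (c - b))"
  define T where "T = m * tan (m * a / 2)"
  define IE where "IE = integral (cbox (0,0) (a,b)) (\<lambda>z. (D z (1,0))\<^sup>2 + (D z (0,1))\<^sup>2)"
  define I0 where "I0 = integral {0..a} (\<lambda>x. (w (x,0))\<^sup>2)"
  define Ib where "Ib = integral {0..a} (\<lambda>x. (w (x,b))\<^sup>2)"
  define IL where "IL = integral {0..b} (\<lambda>y. (w (0,y))\<^sup>2)"
  define IR where "IR = integral {0..b} (\<lambda>y. (w (a,y))\<^sup>2)"
  have calibration: "ennreal (A * I0) \<le> ennreal (IE + B * Ib + T * (IL + IR))"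
    using tan_coth_calibration[OF assms]
    unfolding A_def B_def T_def IE_def I0_def Ib_def IL_def IR_def by (intro ennreal_leI)
  have "0 \<le> T"
    unfolding T_def using assms by (intro mult_nonneg_nonneg tan_pos_pi2_le) (auto simp: field_simps)
  then have coeffs_nonneg: "0 \<le> A" "0 \<le> B" "0 \<le> T"
    unfolding A_def B_def using assms by auto
  have cont_w: "continuous_on UNIV w" and cont_grad: "continuous_on UNIV (\<lambda>z. (D z (1,0))\<^sup>2 + (D z (0,1))\<^sup>2)"
    using C1_fun_continuous[OF w] by (auto intro!: continuous_intros)
  have cont_sides: "continuous_on S (\<lambda>x. (w (x,y))\<^sup>2)" "continuous_on S (\<lambda>y. (w (x,y))\<^sup>2)" for S x y
    by (auto intro!: continuous_intros continuous_on_compose2[OF cont_w])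
  have int_grad: "(\<integral>\<^sup>+ z. indicator (rect a b) z * ennreal ((D z (1,0))\<^sup>2 + (D z (0,1))\<^sup>2) \<partial>lborel) = ennreal IE"
    unfolding IE_def by (rule nn_integral_rect_continuous) (auto intro: continuous_on_subset[OF cont_grad])
  have int_sides:
    "(\<integral>\<^sup>+ x. indicator {0<..<a} x * ennreal ((w (x,0))\<^sup>2) \<partial>lborel) = ennreal I0"
    "(\<integral>\<^sup>+ x. indicator {0<..<a} x * ennreal ((w (x,b))\<^sup>2) \<partial>lborel) = ennreal Ib"
    "(\<integral>\<^sup>+ y. indicator {0<..<b} y * ennreal ((w (0,y))\<^sup>2) \<partial>lborel) = ennreal IL"
    "(\<integral>\<^sup>+ y. indicator {0<..<b} y * ennreal ((w (a,y))\<^sup>2) \<partial>lborel) = ennreal IR"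
    unfolding I0_def Ib_def IL_def IR_def by (auto intro!: nn_integral_interval_continuous cont_sides)
  have "0 \<le> I0" "0 \<le> IE" "0 \<le> Ib" "0 \<le> IL" "0 \<le> IR"
    unfolding I0_def IE_def Ib_def IL_def IR_def
    by (auto intro!: integral_nonneg integrable_continuous_real integrable_continuous cont_sides
        intro: continuous_on_subset[OF cont_grad])
  with calibration coeffs_nonneg show ?thesis
    unfolding A_def[symmetric] B_def[symmetric] T_def[symmetric] int_grad int_sides
    by (simp add: ennreal_mult ennreal_plus)
qed

lemma sq_le_split:
  fixes p q e :: real
  assumes "0 < e"
  shows "p\<^sup>2 \<le> (1 + e) * q\<^sup>2 + (1 + 1 / e) * (q - p)\<^sup>2"
proof -
  have "(1 + e) * q\<^sup>2 + (1 + 1 / e) * (q - p)\<^sup>2 - p\<^sup>2 = (e * q - (p - q))\<^sup>2 / e"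
    using assms by (simp add: field_simps power2_eq_square)
  moreover have "0 \<le> (e * q - (p - q))\<^sup>2 / e" using assms by simp
  ultimately show ?thesis by linarith
qed

lemma nn_integral_indicator_le_lincomb:
  assumes [measurable]: "S \<in> sets M" "G \<in> borel_measurable M" "H \<in> borel_measurable M"
    and "0 \<le> c" "0 \<le> d"
    and "\<And>x. x \<in> S \<Longrightarrow> F x \<le> c * G x + d * H x"
    and "\<And>x. x \<in> S \<Longrightarrow> 0 \<le> G x" "\<And>x. x \<in> S \<Longrightarrow> 0 \<le> H x"
  shows "(\<integral>\<^sup>+ x. indicator S x * ennreal (F x) \<partial>M)
    \<le> ennreal c * (\<integral>\<^sup>+ x. indicator S x * ennreal (G x) \<partial>M)
      + ennreal d * (\<integral>\<^sup>+ x. indicator S x * ennreal (H x) \<partial>M)"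
proof -
  have "indicator S x * ennreal (F x)
      \<le> ennreal c * (indicator S x * ennreal (G x)) + ennreal d * (indicator S x * ennreal (H x))" for x
  proof (cases "x \<in> S")
    case True
    then have "ennreal (F x) \<le> ennreal (c * G x + d * H x)"
      using assms(6) by (intro ennreal_leI)
    also have "\<dots> = ennreal c * ennreal (G x) + ennreal d * ennreal (H x)"
      using True assms(4,5,7,8) by (simp add: ennreal_mult ennreal_plus)
    finally show ?thesis using True by simp
  qed simp
  then have "(\<integral>\<^sup>+ x. indicator S x * ennreal (F x) \<partial>M)
      \<le> (\<integral>\<^sup>+ x. ennreal c * (indicator S x * ennreal (G x)) + ennreal d * (indicator S x * ennreal (H x)) \<partial>M)"
    by (intro nn_integral_mono)
  also have "\<dots> = ennreal c * (\<integral>\<^sup>+ x. indicator S x * ennreal (G x) \<partial>M)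
      + ennreal d * (\<integral>\<^sup>+ x. indicator S x * ennreal (H x) \<partial>M)"
    by (simp add: nn_integral_add nn_integral_cmult)
  finally show ?thesis .
qed

lemma nn_integral_indicator_sq_diff_AE_zero:
  fixes f g :: "real \<Rightarrow> real"
  assumes "AE x in lborel. x \<in> S \<longrightarrow> g x = 0" "S' \<subseteq> S"
  shows "(\<integral>\<^sup>+ x. indicator S' x * ennreal ((f x)\<^sup>2) \<partial>lborel)
    = (\<integral>\<^sup>+ x. indicator S' x * ennreal ((f x - g x)\<^sup>2) \<partial>lborel)"
  using assms(1) by (intro nn_integral_cong_AE, eventually_elim) (use assms(2) in \<open>auto simp: indicator_def\<close>)

lemma rect_sides_le_trace_dist:
  fixes w u :: "real \<times> real \<Rightarrow> real"
  assumes [measurable]: "(\<lambda>x. w (x, 0)) \<in> borel_measurable lborel" "(\<lambda>x. u (x, 0)) \<in> borel_measurable lborel"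
    and "0 < e"
    and norm: "(\<integral>\<^sup>+ x. indicator {0<..<a} x * ennreal ((u (x, 0))\<^sup>2) \<partial>lborel) = 1"
    and top: "AE x in lborel. x \<in> {0<..<a} \<longrightarrow> u (x, b) = 0"
    and left: "AE y in lborel. y \<in> {0..b} \<longrightarrow> u (0, y) = 0"
    and right: "AE y in lborel. y \<in> {0..b} \<longrightarrow> u (a, y) = 0"
  defines "d \<equiv> bdry_nn_integral a b (\<lambda>z. ennreal ((w z - u z)\<^sup>2))"
  shows "1 \<le> ennreal (1 + e) * (\<integral>\<^sup>+ x. indicator {0<..<a} x * ennreal ((w (x, 0))\<^sup>2) \<partial>lborel)
      + ennreal (1 + 1 / e) * d"
    and "(\<integral>\<^sup>+ x. indicator {0<..<a} x * ennreal ((w (x, b))\<^sup>2) \<partial>lborel) \<le> d"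
    and "(\<integral>\<^sup>+ y. indicator {0<..<b} y * ennreal ((w (0, y))\<^sup>2) \<partial>lborel) \<le> d"
    and "(\<integral>\<^sup>+ y. indicator {0<..<b} y * ennreal ((w (a, y))\<^sup>2) \<partial>lborel) \<le> d"
proof -
  define side where "side S f = (\<integral>\<^sup>+ t. indicator S t * ennreal ((f t)\<^sup>2) \<partial>lborel)"
    for S :: "real set" and f :: "real \<Rightarrow> real"
  have d_eq: "d = side {0<..<a} (\<lambda>x. w (x,0) - u (x,0)) + side {0<..<a} (\<lambda>x. w (x,b) - u (x,b))
      + side {0<..<b} (\<lambda>y. w (0,y) - u (0,y)) + side {0<..<b} (\<lambda>y. w (a,y) - u (a,y))"
    unfolding d_def bdry_nn_integral_def side_def by simp
  have "1 = side {0<..<a} (\<lambda>x. u (x,0))"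
    using norm unfolding side_def by simp
  also have "\<dots> \<le> ennreal (1 + e) * side {0<..<a} (\<lambda>x. w (x,0))
      + ennreal (1 + 1 / e) * side {0<..<a} (\<lambda>x. w (x,0) - u (x,0))"
    unfolding side_def using \<open>0 < e\<close>
    by (intro nn_integral_indicator_le_lincomb sq_le_split) auto
  also have "\<dots> \<le> ennreal (1 + e) * side {0<..<a} (\<lambda>x. w (x,0)) + ennreal (1 + 1 / e) * d"
    unfolding d_eq by (intro add_left_mono mult_left_mono) (auto simp: add.assoc)
  finally show "1 \<le> ennreal (1 + e) * (\<integral>\<^sup>+ x. indicator {0<..<a} x * ennreal ((w (x, 0))\<^sup>2) \<partial>lborel)
      + ennreal (1 + 1 / e) * d"
    unfolding side_def .
  show "(\<integral>\<^sup>+ x. indicator {0<..<a} x * ennreal ((w (x, b))\<^sup>2) \<partial>lborel) \<le> d"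
    using nn_integral_indicator_sq_diff_AE_zero[OF top order_refl, of "\<lambda>x. w (x,b)"]
    unfolding d_eq side_def by (simp add: add_increasing add_increasing2)
  show "(\<integral>\<^sup>+ y. indicator {0<..<b} y * ennreal ((w (0, y))\<^sup>2) \<partial>lborel) \<le> d"
    using nn_integral_indicator_sq_diff_AE_zero[OF left, of "{0<..<b}" "\<lambda>y. w (0,y)"]
    unfolding d_eq side_def by (simp add: add_increasing add_increasing2 subset_eq)
  show "(\<integral>\<^sup>+ y. indicator {0<..<b} y * ennreal ((w (a, y))\<^sup>2) \<partial>lborel) \<le> d"
    using nn_integral_indicator_sq_diff_AE_zero[OF right, of "{0<..<b}" "\<lambda>y. w (a,y)"]
    unfolding d_eq side_def by (simp add: add_increasing add_increasing2 subset_eq)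
qed

lemma calibration_le_energy_plus_trace_dist:
  fixes u :: "real \<times> real \<Rightarrow> real"
  assumes w: "C1_fun w D" and "0 < a" "0 < b" "0 < m" "m < pi / a" "b < c" "0 < e"
    and "(\<lambda>x. u (x, 0)) \<in> borel_measurable lborel"
    and "(\<integral>\<^sup>+ x. indicator {0<..<a} x * ennreal ((u (x, 0))\<^sup>2) \<partial>lborel) = 1"
    and "AE x in lborel. x \<in> {0<..<a} \<longrightarrow> u (x, b) = 0"
    and "AE y in lborel. y \<in> {0..b} \<longrightarrow> u (0, y) = 0"
    and "AE y in lborel. y \<in> {0..b} \<longrightarrow> u (a, y) = 0"
  defines "d \<equiv> bdry_nn_integral a b (\<lambda>z. ennreal ((w z - u z)\<^sup>2))"
  shows "ennreal (m / tanh (m * c))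
    \<le> ennreal (1 + e) * ((\<integral>\<^sup>+ z. indicator (rect a b) z * ennreal ((D z (1,0))\<^sup>2 + (D z (0,1))\<^sup>2) \<partial>lborel)
        + ennreal (m / tanh (m * (c - b))) * d + ennreal (m * tan (m * a / 2)) * (d + d))
      + ennreal (m / tanh (m * c)) * ennreal (1 + 1 / e) * d"
proof -
  define A where "A = m / tanh (m * c)"
  define I0 where "I0 = (\<integral>\<^sup>+ x. indicator {0<..<a} x * ennreal ((w (x, 0))\<^sup>2) \<partial>lborel)"
  define E where "E = (\<integral>\<^sup>+ z. indicator (rect a b) z * ennreal ((D z (1,0))\<^sup>2 + (D z (0,1))\<^sup>2) \<partial>lborel)"
  note sides = rect_sides_le_trace_dist[OF C1_fun_measurable(4)[OF w] assms(8,7,9-12), folded d_def I0_def]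
  have "ennreal A = ennreal A * 1" by simp
  also have "\<dots> \<le> ennreal A * (ennreal (1 + e) * I0 + ennreal (1 + 1 / e) * d)"
    by (intro mult_left_mono sides(1)) simp
  also have "\<dots> = ennreal (1 + e) * (ennreal A * I0) + ennreal A * ennreal (1 + 1 / e) * d"
    by (simp add: algebra_simps)
  also have "\<dots> \<le> ennreal (1 + e) * (E + ennreal (m / tanh (m * (c - b)))
        * (\<integral>\<^sup>+ x. indicator {0<..<a} x * ennreal ((w (x, b))\<^sup>2) \<partial>lborel)
        + ennreal (m * tan (m * a / 2)) * ((\<integral>\<^sup>+ y. indicator {0<..<b} y * ennreal ((w (0, y))\<^sup>2) \<partial>lborel)
          + (\<integral>\<^sup>+ y. indicator {0<..<b} y * ennreal ((w (a, y))\<^sup>2) \<partial>lborel)))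
      + ennreal A * ennreal (1 + 1 / e) * d"
    using C1_fun_tan_coth_calibration[OF w assms(2-6)] unfolding A_def I0_def E_def
    by (intro add_right_mono mult_left_mono) auto
  also have "\<dots> \<le> ennreal (1 + e) * (E + ennreal (m / tanh (m * (c - b))) * d + ennreal (m * tan (m * a / 2)) * (d + d))
      + ennreal A * ennreal (1 + 1 / e) * d"
    using sides(2-4) by (intro add_mono mult_left_mono order_refl) auto
  finally show ?thesis unfolding A_def E_def .
qed

lemma nn_integral_indicator_eq_set_integral:
  fixes f :: "'a \<Rightarrow> real"
  assumes "set_integrable M S f" "\<And>x. x \<in> S \<Longrightarrow> 0 \<le> f x"
  shows "(\<integral>\<^sup>+ x. indicator S x * ennreal (f x) \<partial>M) = ennreal (LINT x:S|M. f x)"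
proof -
  have "(\<integral>\<^sup>+ x. indicator S x * ennreal (f x) \<partial>M) = (\<integral>\<^sup>+ x. ennreal (indicator S x *\<^sub>R f x) \<partial>M)"
    by (intro nn_integral_cong) (simp add: indicator_def)
  also have "\<dots> = ennreal (LINT x:S|M. f x)"
    using assms unfolding set_lebesgue_integral_def set_integrable_def
    by (intro nn_integral_eq_integral) (auto simp: indicator_def)
  finally show ?thesis .
qed

lemma nn_integral_sum_sq_le_split:
  fixes p1 p2 q1 q2 r :: "'a \<Rightarrow> real"
  assumes [measurable]: "S \<in> sets M" "p1 \<in> borel_measurable M" "p2 \<in> borel_measurable M"
    and "set_borel_measurable M S q1" "set_borel_measurable M S q2" "set_borel_measurable M S r"
    and "0 < e"
  shows "(\<integral>\<^sup>+ x. indicator S x * ennreal ((p1 x)\<^sup>2 + (p2 x)\<^sup>2) \<partial>M)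
    \<le> ennreal (1 + e) * (\<integral>\<^sup>+ x. indicator S x * ennreal ((q1 x)\<^sup>2 + (q2 x)\<^sup>2) \<partial>M)
      + ennreal (1 + 1 / e) * (\<integral>\<^sup>+ x. indicator S x * ennreal ((r x)\<^sup>2 + (p1 x - q1 x)\<^sup>2 + (p2 x - q2 x)\<^sup>2) \<partial>M)"
proof -
  \<comment> \<open>\<open>q1\<close>, \<open>q2\<close>, \<open>r\<close> are only measurable on \<open>S\<close>, so we pass to their truncations.\<close>
  define q1' q2' r' where "q1' x = indicator S x * q1 x" and "q2' x = indicator S x * q2 x"
    and "r' x = indicator S x * r x" for x
  have [measurable]: "q1' \<in> borel_measurable M" "q2' \<in> borel_measurable M" "r' \<in> borel_measurable M"
    using assms(4-6) unfolding set_borel_measurable_def q1'_def q2'_def r'_def by simp_all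
  have "p1\<^sup>2 + p2\<^sup>2 \<le> (1 + e) * (q1\<^sup>2 + q2\<^sup>2) + (1 + 1 / e) * (r\<^sup>2 + (p1 - q1)\<^sup>2 + (p2 - q2)\<^sup>2)"
    for p1 p2 q1 q2 r :: real
  proof -
    have "p1\<^sup>2 \<le> (1 + e) * q1\<^sup>2 + (1 + 1 / e) * (q1 - p1)\<^sup>2" "p2\<^sup>2 \<le> (1 + e) * q2\<^sup>2 + (1 + 1 / e) * (q2 - p2)\<^sup>2"
      using sq_le_split[OF \<open>0 < e\<close>] by auto
    moreover have "0 \<le> (1 + 1 / e) * r\<^sup>2" using \<open>0 < e\<close> by simp
    ultimately show ?thesis by (simp add: algebra_simps power2_commute)
  qed
  then have "(\<integral>\<^sup>+ x. indicator S x * ennreal ((p1 x)\<^sup>2 + (p2 x)\<^sup>2) \<partial>M)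
    \<le> ennreal (1 + e) * (\<integral>\<^sup>+ x. indicator S x * ennreal ((q1' x)\<^sup>2 + (q2' x)\<^sup>2) \<partial>M)
      + ennreal (1 + 1 / e) * (\<integral>\<^sup>+ x. indicator S x * ennreal ((r' x)\<^sup>2 + (p1 x - q1' x)\<^sup>2 + (p2 x - q2' x)\<^sup>2) \<partial>M)"
    using \<open>0 < e\<close> by (intro nn_integral_indicator_le_lincomb) auto
  moreover have "(\<integral>\<^sup>+ x. indicator S x * ennreal ((q1' x)\<^sup>2 + (q2' x)\<^sup>2) \<partial>M)
      = (\<integral>\<^sup>+ x. indicator S x * ennreal ((q1 x)\<^sup>2 + (q2 x)\<^sup>2) \<partial>M)"
    "(\<integral>\<^sup>+ x. indicator S x * ennreal ((r' x)\<^sup>2 + (p1 x - q1' x)\<^sup>2 + (p2 x - q2' x)\<^sup>2) \<partial>M)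
      = (\<integral>\<^sup>+ x. indicator S x * ennreal ((r x)\<^sup>2 + (p1 x - q1 x)\<^sup>2 + (p2 x - q2 x)\<^sup>2) \<partial>M)"
    unfolding q1'_def q2'_def r'_def by (auto intro!: nn_integral_cong simp: indicator_def)
  ultimately show ?thesis by simp
qed

lemma rect_admissible_calibration_bound:
  assumes adm: "rect_admissible a b v g1 g2 u" and w: "C1_fun w D"
    and "0 < a" "0 < b" "0 < m" "m < pi / a" "b < c" "0 < e"
  defines "h \<equiv> \<integral>\<^sup>+ z. indicator (rect a b) z *
      ennreal ((w z - v z)\<^sup>2 + (D z (1,0) - g1 z)\<^sup>2 + (D z (0,1) - g2 z)\<^sup>2) \<partial>lborel"
    and "d \<equiv> bdry_nn_integral a b (\<lambda>z. ennreal ((w z - u z)\<^sup>2))"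
  shows "ennreal (m / tanh (m * c))
    \<le> ennreal (1 + e) * ((ennreal (1 + e) * ennreal (LINT z:rect a b|lborel. (g1 z)\<^sup>2 + (g2 z)\<^sup>2)
        + ennreal (1 + 1 / e) * h) + ennreal (m / tanh (m * (c - b))) * d + ennreal (m * tan (m * a / 2)) * (d + d))
      + ennreal (m / tanh (m * c)) * ennreal (1 + 1 / e) * d"
proof -
  have H1: "H1_on (rect a b) v g1 g2"
    and u_meas: "(\<lambda>x. u (x, 0)) \<in> borel_measurable lborel"
    and bdry: "(\<integral>\<^sup>+ x. indicator {0<..<a} x * ennreal ((u (x, 0))\<^sup>2) \<partial>lborel) = 1"
      "AE x in lborel. x \<in> {0<..<a} \<longrightarrow> u (x, b) = 0"
      "AE y in lborel. y \<in> {0..b} \<longrightarrow> u (0, y) = 0"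
      "AE y in lborel. y \<in> {0..b} \<longrightarrow> u (a, y) = 0"
    using adm unfolding rect_admissible_def rect_trace_def by auto
  note [measurable] = C1_fun_measurable[OF w]
  have "set_borel_measurable lborel (rect a b) v" and g_meas: "set_borel_measurable lborel (rect a b) g1"
    "set_borel_measurable lborel (rect a b) g2"
    using H1 unfolding H1_on_def L2_on_def by auto
  then have "set_borel_measurable lborel (rect a b) (\<lambda>z. w z - v z)"
    unfolding set_borel_measurable_def scaleR_diff_right by measurable
  then have "(\<integral>\<^sup>+ z. indicator (rect a b) z * ennreal ((D z (1,0))\<^sup>2 + (D z (0,1))\<^sup>2) \<partial>lborel)
      \<le> ennreal (1 + e) * (\<integral>\<^sup>+ z. indicator (rect a b) z * ennreal ((g1 z)\<^sup>2 + (g2 z)\<^sup>2) \<partial>lborel)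
        + ennreal (1 + 1 / e) * h"
    unfolding h_def using g_meas \<open>0 < e\<close> by (intro nn_integral_sum_sq_le_split) (auto simp: rect_eq_box)
  also have "(\<integral>\<^sup>+ z. indicator (rect a b) z * ennreal ((g1 z)\<^sup>2 + (g2 z)\<^sup>2) \<partial>lborel)
      = ennreal (LINT z:rect a b|lborel. (g1 z)\<^sup>2 + (g2 z)\<^sup>2)"
    using H1 unfolding H1_on_def L2_on_def by (intro nn_integral_indicator_eq_set_integral) auto
  finally show ?thesis
    unfolding d_def
    by (intro order_trans[OF calibration_le_energy_plus_trace_dist[OF w assms(3-8) u_meas bdry]]
        add_mono mult_left_mono order_refl) auto
qed

lemma rect_admissible_energy_ge:
  assumes adm: "rect_admissible a b v g1 g2 u"
    and "0 < a" "0 < b" "0 < m" "m < pi / a" "b < c" "0 < e"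
  shows "m / tanh (m * c) \<le> (1 + e)\<^sup>2 * (LINT z:rect a b|lborel. (g1 z)\<^sup>2 + (g2 z)\<^sup>2)"
proof -
  from adm obtain w Dw where C1: "\<And>n. C1_fun (w n) (Dw n)"
    and h_conv: "(\<lambda>n. \<integral>\<^sup>+ z. indicator (rect a b) z *
        ennreal ((w n z - v z)\<^sup>2 + (Dw n z (1,0) - g1 z)\<^sup>2 + (Dw n z (0,1) - g2 z)\<^sup>2) \<partial>lborel) \<longlonglongrightarrow> 0"
    and d_conv: "(\<lambda>n. bdry_nn_integral a b (\<lambda>z. ennreal ((w n z - u z)\<^sup>2))) \<longlonglongrightarrow> 0"
    unfolding rect_admissible_def rect_trace_def by blast
  define h where "h n = (\<integral>\<^sup>+ z. indicator (rect a b) z *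
      ennreal ((w n z - v z)\<^sup>2 + (Dw n z (1,0) - g1 z)\<^sup>2 + (Dw n z (0,1) - g2 z)\<^sup>2) \<partial>lborel)" for n
  define d where "d n = bdry_nn_integral a b (\<lambda>z. ennreal ((w n z - u z)\<^sup>2))" for n
  define Er where "Er = (LINT z:rect a b|lborel. (g1 z)\<^sup>2 + (g2 z)\<^sup>2)"
  define A B T where "A = m / tanh (m * c)" and "B = m / tanh (m * (c - b))" and "T = m * tan (m * a / 2)"
  have "0 \<le> Er"
    unfolding Er_def set_lebesgue_integral_def by (intro integral_nonneg_AE) (auto simp: indicator_def)
  have "ennreal A \<le> ennreal (1 + e) * ((ennreal (1 + e) * ennreal Er + ennreal (1 + 1 / e) * h n)
      + ennreal B * d n + ennreal T * (d n + d n)) + ennreal A * ennreal (1 + 1 / e) * d n" for n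
    unfolding A_def B_def T_def Er_def h_def d_def by (rule rect_admissible_calibration_bound[OF adm C1 assms(2-7)])
  moreover have "(\<lambda>n. ennreal (1 + e) * ((ennreal (1 + e) * ennreal Er + ennreal (1 + 1 / e) * h n)
      + ennreal B * d n + ennreal T * (d n + d n)) + ennreal A * ennreal (1 + 1 / e) * d n)
    \<longlonglongrightarrow> ennreal (1 + e) * ((ennreal (1 + e) * ennreal Er + ennreal (1 + 1 / e) * 0)
      + ennreal B * 0 + ennreal T * (0 + 0)) + ennreal A * ennreal (1 + 1 / e) * 0"
    using h_conv d_conv unfolding h_def[abs_def] d_def[abs_def]
    by (intro tendsto_add tendsto_const ennreal_tendsto_cmult) (auto simp: ennreal_mult_less_top)
  ultimately have "ennreal A \<le> ennreal (1 + e) * (ennreal (1 + e) * ennreal Er)"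
    by (simp add: LIMSEQ_le_const)
  also have "\<dots> = ennreal ((1 + e)\<^sup>2 * Er)"
    using \<open>0 < e\<close> \<open>0 \<le> Er\<close> by (simp add: ennreal_mult power2_eq_square mult.assoc)
  finally show ?thesis
    unfolding A_def Er_def[symmetric] using \<open>0 \<le> Er\<close> by (simp add: ennreal_le_iff)
qed

lemma integral_sin_sq_half_period:
  assumes "0 \<le> a" "l * a = pi"
  shows "integral {0..a} (\<lambda>x. (sin (l * x))\<^sup>2) = a / 2"
proof -
  have "l \<noteq> 0" using assms(2) by auto
  have "((\<lambda>x. x / 2 - sin (2 * l * x) / (4 * l)) has_real_derivative (sin (l * x))\<^sup>2) (at x)" for x
  proof -
    have "((\<lambda>x. x / 2 - sin (2 * l * x) / (4 * l)) has_real_derivative 1 / 2 - cos (2 * l * x) * (2 * l) / (4 * l)) (at x)"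
      by (auto intro!: derivative_eq_intros)
    moreover have "1 / 2 - cos (2 * l * x) * (2 * l) / (4 * l) = (sin (l * x))\<^sup>2"
      using \<open>l \<noteq> 0\<close> cos_double_sin[of "l * x"] by (simp add: field_simps mult.assoc)
    ultimately show ?thesis by simp
  qed
  then have "((\<lambda>x. (sin (l * x))\<^sup>2) has_integral (a / 2 - sin (2 * l * a) / (4 * l)) - (0 / 2 - sin (2 * l * 0) / (4 * l))) {0..a}"
    using assms(1) by (intro fundamental_theorem_of_calculus)
      (auto simp: has_real_derivative_iff_has_vector_derivative[symmetric] has_field_derivative_at_within)
  moreover have "sin (2 * l * a) = 0" using assms(2) by (simp add: mult.assoc)
  ultimately show ?thesis by (simp add: integral_unique)
qed

lemma dirichlet_integral_sin_sinh:
  assumes "0 \<le> a" "0 \<le> b" "l * a = pi"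
  shows "integral (cbox (0,0) (a,b))
      (\<lambda>z. (l * cos (l * fst z) * sinh (l * (b - snd z)))\<^sup>2 + (l * sin (l * fst z) * cosh (l * (b - snd z)))\<^sup>2)
    = l * sinh (l * b) * cosh (l * b) * (a / 2)"
proof -
  \<comment> \<open>Green's formula: the integrand is \<open>div (\<phi> \<nabla>\<phi>)\<close> for the harmonic \<open>\<phi> = sin (l x) sinh (l (b - y))\<close>.\<close>
  define Px where "Px z = l * sin (l * fst z) * cos (l * fst z) * (sinh (l * (b - snd z)))\<^sup>2" for z :: "real \<times> real"
  define Py where "Py z = - (l * (sin (l * fst z))\<^sup>2 * sinh (l * (b - snd z)) * cosh (l * (b - snd z)))"
    for z :: "real \<times> real"
  define Qx where "Qx z = l\<^sup>2 * ((cos (l * fst z))\<^sup>2 - (sin (l * fst z))\<^sup>2) * (sinh (l * (b - snd z)))\<^sup>2"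
    for z :: "real \<times> real"
  define Qy where "Qy z = l\<^sup>2 * (sin (l * fst z))\<^sup>2 * ((cosh (l * (b - snd z)))\<^sup>2 + (sinh (l * (b - snd z)))\<^sup>2)"
    for z :: "real \<times> real"
  have cont: "continuous_on (cbox (0,0) (a,b)) Qx" "continuous_on (cbox (0,0) (a,b)) Qy"
    unfolding Qx_def Qy_def by (auto intro!: continuous_intros)
  have "integral (cbox (0,0) (a,b)) Qx = integral {0..b} (\<lambda>y. Px (a,y) - Px (0,y))"
    by (rule integral_cbox_partial_fst[OF \<open>0 \<le> a\<close> cont(1)])
       (auto simp: Px_def Qx_def algebra_simps power2_eq_square intro!: derivative_eq_intros)
  also have "\<dots> = 0"
    using assms(3) by (simp add: Px_def mult.commute)
  finally have int_Qx: "integral (cbox (0,0) (a,b)) Qx = 0" .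
  have "integral (cbox (0,0) (a,b)) Qy = integral {0..a} (\<lambda>x. Py (x,b) - Py (x,0))"
    by (rule integral_cbox_partial_snd[OF \<open>0 \<le> b\<close> cont(2)])
       (auto simp: Py_def Qy_def algebra_simps power2_eq_square intro!: derivative_eq_intros)
  also have "\<dots> = l * sinh (l * b) * cosh (l * b) * integral {0..a} (\<lambda>x. (sin (l * x))\<^sup>2)"
    by (simp add: Py_def)
  finally have int_Qy: "integral (cbox (0,0) (a,b)) Qy = l * sinh (l * b) * cosh (l * b) * (a / 2)"
    using integral_sin_sq_half_period[OF \<open>0 \<le> a\<close> assms(3)] by simp
  have "integral (cbox (0,0) (a,b))
      (\<lambda>z. (l * cos (l * fst z) * sinh (l * (b - snd z)))\<^sup>2 + (l * sin (l * fst z) * cosh (l * (b - snd z)))\<^sup>2)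
    = integral (cbox (0,0) (a,b)) (\<lambda>z. Qx z + Qy z)"
    by (intro integral_cong) (simp add: Qx_def Qy_def power2_eq_square algebra_simps)
  also have "\<dots> = integral (cbox (0,0) (a,b)) Qx + integral (cbox (0,0) (a,b)) Qy"
    using cont by (simp add: integral_add integrable_continuous)
  finally show ?thesis unfolding int_Qx int_Qy by simp
qed

text \<open>The library versions of these rules require \<open>g\<close> to map a normed field into itself.\<close>

lemma has_derivative_sinh_compose [derivative_intros]:
  fixes g :: "'a::real_normed_vector \<Rightarrow> real"
  assumes "(g has_derivative g') (at x within s)"
  shows "((\<lambda>x. sinh (g x)) has_derivative (\<lambda>h. g' h * cosh (g x))) (at x within s)"
proof -
  have "(sinh has_real_derivative cosh (g x)) (at (g x))"
    using has_field_derivative_sinh[OF DERIV_ident] by simp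
  from DERIV_compose_FDERIV[OF this assms] show ?thesis .
qed

lemma has_derivative_cosh_compose [derivative_intros]:
  fixes g :: "'a::real_normed_vector \<Rightarrow> real"
  assumes "(g has_derivative g') (at x within s)"
  shows "((\<lambda>x. cosh (g x)) has_derivative (\<lambda>h. g' h * sinh (g x))) (at x within s)"
proof -
  have "(cosh has_real_derivative sinh (g x)) (at (g x))"
    using has_field_derivative_cosh[OF DERIV_ident] by simp
  from DERIV_compose_FDERIV[OF this assms] show ?thesis .
qed

lemma rect_admissible_minimizer:
  assumes "0 < a" "0 < b"
  obtains v g1 g2 u where "rect_admissible a b v g1 g2 u"
    and "(LINT z:rect a b|lborel. (g1 z)\<^sup>2 + (g2 z)\<^sup>2) = pi / (a * tanh (pi * b / a))"
proof -
  define l where "l = pi / a"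
  define s where "s = sinh (l * b)"
  define k where "k = sqrt (2 / a) / s"
  have "l * a = pi" "0 < l" using assms by (simp_all add: l_def)
  then have "0 < s" using assms by (simp add: s_def)
  have k2: "k\<^sup>2 = 2 / (a * s\<^sup>2)" using assms \<open>0 < s\<close> by (simp add: k_def power_divide)
  define v where "v z = k * sin (l * fst z) * sinh (l * (b - snd z))" for z :: "real \<times> real"
  define g1 where "g1 z = k * l * cos (l * fst z) * sinh (l * (b - snd z))" for z :: "real \<times> real"
  define g2 where "g2 z = - (k * l * sin (l * fst z) * cosh (l * (b - snd z)))" for z :: "real \<times> real"
  define Dv :: "real \<times> real \<Rightarrow> (real \<times> real) \<Rightarrow>\<^sub>L real"
    where "Dv z = g1 z *\<^sub>R fst_blinfun + g2 z *\<^sub>R snd_blinfun" for z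
  have Dv_apply: "blinfun_apply (Dv z) = (\<lambda>h. g1 z * fst h + g2 z * snd h)" for z
    by (simp add: Dv_def fun_eq_iff blinfun.add_left blinfun.scaleR_left)
  have "(v has_derivative blinfun_apply (Dv z)) (at z)" for z
    unfolding Dv_apply v_def g1_def g2_def
    by (auto intro!: derivative_eq_intros ext simp: algebra_simps)
  moreover have "continuous_on UNIV Dv"
    unfolding Dv_def g1_def g2_def by (intro continuous_intros)
  ultimately have C1: "C1_fun v Dv" unfolding C1_fun_def by blast
  have grad: "g1 = (\<lambda>z. Dv z (1,0))" "g2 = (\<lambda>z. Dv z (0,1))" by (simp_all add: Dv_apply)
  have "(\<integral>\<^sup>+ x. indicator {0<..<a} x * ennreal ((v (x, 0))\<^sup>2) \<partial>lborel)
      = ennreal (integral {0..a} (\<lambda>x. (v (x, 0))\<^sup>2))"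
    unfolding v_def by (rule nn_integral_interval_continuous) (auto intro!: continuous_intros)
  also have "integral {0..a} (\<lambda>x. (v (x, 0))\<^sup>2) = (k * s)\<^sup>2 * integral {0..a} (\<lambda>x. (sin (l * x))\<^sup>2)"
    unfolding v_def s_def by (simp add: power_mult_distrib mult_ac)
  also have "\<dots> = 1"
    using integral_sin_sq_half_period[OF less_imp_le[OF \<open>0 < a\<close>] \<open>l * a = pi\<close>] assms \<open>0 < s\<close>
    by (simp add: power_mult_distrib k2 field_simps)
  finally have "rect_admissible a b v g1 g2 v"
    unfolding grad using \<open>l * a = pi\<close> assms
    by (intro C1_fun_rect_admissible[OF C1]) (simp_all add: v_def mult.commute)
  moreover have "(LINT z:rect a b|lborel. (g1 z)\<^sup>2 + (g2 z)\<^sup>2) = pi / (a * tanh (pi * b / a))"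
  proof -
    have "continuous_on UNIV (\<lambda>z. (g1 z)\<^sup>2 + (g2 z)\<^sup>2)"
      unfolding g1_def g2_def by (intro continuous_intros)
    then have "(LINT z:rect a b|lborel. (g1 z)\<^sup>2 + (g2 z)\<^sup>2) = integral (cbox (0,0) (a,b)) (\<lambda>z. (g1 z)\<^sup>2 + (g2 z)\<^sup>2)"
      by (rule set_integral_rect_continuous)
    also have "\<dots> = k\<^sup>2 * integral (cbox (0,0) (a,b)) (\<lambda>z. (l * cos (l * fst z) * sinh (l * (b - snd z)))\<^sup>2
        + (l * sin (l * fst z) * cosh (l * (b - snd z)))\<^sup>2)"
      unfolding g1_def g2_def by (simp add: power_mult_distrib algebra_simps flip: integral_mult_right)
    also have "\<dots> = k\<^sup>2 * (l * s * cosh (l * b) * (a / 2))"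
      using assms \<open>l * a = pi\<close> by (simp add: dirichlet_integral_sin_sinh s_def)
    also have "\<dots> = pi / (a * tanh (pi * b / a))"
      unfolding k2 s_def l_def using assms \<open>0 < s\<close>[unfolded s_def l_def]
      by (simp add: tanh_def field_simps power2_eq_square)
    finally show ?thesis .
  qed
  ultimately show ?thesis by (rule that)
qed

lemma le_of_forall_le_one_plus_sq_mult:
  fixes x y :: real
  assumes "\<And>e. 0 < e \<Longrightarrow> x \<le> (1 + e)\<^sup>2 * y"
  shows "x \<le> y"
proof -
  have "((\<lambda>e. (1 + e)\<^sup>2 * y) \<longlongrightarrow> (1 + 0)\<^sup>2 * y) (at_right 0)"
    by (intro tendsto_intros)
  moreover have "eventually (\<lambda>e. x \<le> (1 + e)\<^sup>2 * y) (at_right (0::real))"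
    using eventually_at_right_less[of 0] by eventually_elim (rule assms)
  ultimately have "x \<le> (1 + 0)\<^sup>2 * y"
    by (intro tendsto_le[OF trivial_limit_at_right_real _ tendsto_const])
  then show ?thesis by simp
qed

lemma le_of_forall_m_coth_le:
  fixes a b Y :: real
  assumes "0 < a" "0 < b"
    and "\<And>m c. 0 < m \<Longrightarrow> m < pi / a \<Longrightarrow> b < c \<Longrightarrow> m / tanh (m * c) \<le> Y"
  shows "pi / (a * tanh (pi * b / a)) \<le> Y"
proof -
  define m where "m t = pi / a * (1 - t)" for t :: real
  have "tanh (m 0 * (b + 0)) \<noteq> 0" "cosh (m 0 * (b + 0)) \<noteq> 0"
    unfolding m_def using assms by (simp_all add: cosh_real_pos[THEN less_imp_neq, symmetric])
  then have "((\<lambda>t. m t / tanh (m t * (b + t))) \<longlongrightarrow> m 0 / tanh (m 0 * (b + 0))) (at_right 0)"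
    unfolding m_def by (intro tendsto_intros)
  moreover have "eventually (\<lambda>t. m t / tanh (m t * (b + t)) \<le> Y) (at_right 0)"
  proof (rule eventually_at_rightI[of 0 1])
    fix t :: real assume "t \<in> {0<..<1}"
    then show "m t / tanh (m t * (b + t)) \<le> Y"
      unfolding m_def using \<open>0 < a\<close> by (intro assms(3)) (auto simp: field_simps)
  qed simp
  ultimately have "m 0 / tanh (m 0 * (b + 0)) \<le> Y"
    by (rule tendsto_le[OF trivial_limit_at_right_real tendsto_const])
  then show ?thesis by (simp add: m_def)
qed

theorem proposition4p4:
  fixes a b :: real
  assumes "a > 0" and "b > 0"
  shows "K_rect a b = pi / (a * tanh (pi * b / a))"
  unfolding K_rect_eq_Inf_admissible
proof (rule cInf_eq_minimum)
  obtain v g1 g2 u where "rect_admissible a b v g1 g2 u"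
    and "(LINT z:rect a b|lborel. (g1 z)\<^sup>2 + (g2 z)\<^sup>2) = pi / (a * tanh (pi * b / a))"
    using rect_admissible_minimizer[OF assms] .
  then show "pi / (a * tanh (pi * b / a))
      \<in> {LINT z:rect a b|lborel. (g1 z)\<^sup>2 + (g2 z)\<^sup>2 | v g1 g2 u. rect_admissible a b v g1 g2 u}"
    unfolding mem_Collect_eq by metis
next
  fix E assume "E \<in> {LINT z:rect a b|lborel. (g1 z)\<^sup>2 + (g2 z)\<^sup>2 | v g1 g2 u. rect_admissible a b v g1 g2 u}"
  then obtain v g1 g2 u where E: "E = (LINT z:rect a b|lborel. (g1 z)\<^sup>2 + (g2 z)\<^sup>2)"
    and adm: "rect_admissible a b v g1 g2 u"
    by blast
  have "m / tanh (m * c) \<le> E" if "0 < m" "m < pi / a" "b < c" for m c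
    unfolding E using rect_admissible_energy_ge[OF adm assms that] by (rule le_of_forall_le_one_plus_sq_mult)
  then show "pi / (a * tanh (pi * b / a)) \<le> E"
    by (rule le_of_forall_m_coth_le[OF assms])
qed

end
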